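(* Let $k\ge1$. For finite $A\subset\mathbb{R}^k$ let $\delta^{(1)}_{\mathrm{diam}}(A)$ and $\delta^{(2)}_{\mathrm{diam}}(A)$ be the diameters of $A$ with respect to the $\ell_1$ and $\ell_2$ (Euclidean) metrics respectively, let $\delta_1(A)=\sum_{i=1}^k\max\{|a_i-b_i|:a,b\in A\}$ be the $\ell_1$ diversity and $\delta_w$ the mean-width diversity on $\mathbb{R}^k$. Then for all finite $A\subset\mathbb{R}^k$, \[ \delta^{(1)}_{\mathrm{diam}}(A)\le\delta_1(A)\le k\,\delta^{(1)}_{\mathrm{diam}}(A), \qquad \delta^{(2)}_{\mathrm{diam}}(A)\le\delta_w(A)\le c\sqrt{k}\,\delta^{(2)}_{\mathrm{diam}}(A), \] where $c>0$ is an absolute constant (i.e. the last bound is $\mathcal{O}(\sqrt{k})\,\delta^{(2)}_{\mathrm{diam}}(A)$). All these bounds are tight: the lower bounds are attained, $\delta_1(A)=k\,\delta^{(1)}_{\mathrm{diam}}(A)$ for some $A$, and $\sup_A\delta_w(A)/\delta^{(2)}_{\mathrm{diam}}(A)$ is of order $\sqrt{k}$.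
   Context: Mean-width diversity on $\mathbb{R}^k$: for compact convex $K\subset\mathbb{R}^k$ and unit $u$, $w(K,u)=\max_{a\in K}a\cdot u-\min_{a\in K}a\cdot u$, and $m_k(K)=\frac{1}{\mu_{k-1}(S^{k-1})}\int_{S^{k-1}}w(K,u)\,d\mu_{k-1}(u)$ with $\mu_{k-1}$ surface measure on the unit sphere; then $\delta_w(A)=\frac{\pi}{B(k/2,1/2)}m_k(\mathrm{conv}(A))$, where $B$ is the beta function. *)

theory Defs
  imports "HOL-Analysis.Analysis"
begin

text \<open>Points of R^k are represented as functions nat => real, only the coordinates
  i < k being relevant (we additionally require them to vanish outside {..<k}).\<close>

definition in_Rk :: "nat \<Rightarrow> (nat \<Rightarrow> real) \<Rightarrow> bool" where
  "in_Rk k a \<longleftrightarrow> (\<forall>i\<ge>k. a i = 0)"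

definition dotk :: "nat \<Rightarrow> (nat \<Rightarrow> real) \<Rightarrow> (nat \<Rightarrow> real) \<Rightarrow> real" where
  "dotk k a b = (\<Sum>i<k. a i * b i)"

definition norm2k :: "nat \<Rightarrow> (nat \<Rightarrow> real) \<Rightarrow> real" where
  "norm2k k a = sqrt (\<Sum>i<k. (a i)\<^sup>2)"

definition norm1k :: "nat \<Rightarrow> (nat \<Rightarrow> real) \<Rightarrow> real" where
  "norm1k k a = (\<Sum>i<k. \<bar>a i\<bar>)"

definition diam1 :: "nat \<Rightarrow> (nat \<Rightarrow> real) set \<Rightarrow> real" where
  "diam1 k A = Max (insert 0 {norm1k k (\<lambda>i. a i - b i) | a b. a \<in> A \<and> b \<in> A})"

definition diam2 :: "nat \<Rightarrow> (nat \<Rightarrow> real) set \<Rightarrow> real" where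
  "diam2 k A = Max (insert 0 {norm2k k (\<lambda>i. a i - b i) | a b. a \<in> A \<and> b \<in> A})"

definition delta1 :: "nat \<Rightarrow> (nat \<Rightarrow> real) set \<Rightarrow> real" where
  "delta1 k A = (\<Sum>i<k. Max (insert 0 {\<bar>a i - b i\<bar> | a b. a \<in> A \<and> b \<in> A}))"

definition convk :: "(nat \<Rightarrow> real) set \<Rightarrow> (nat \<Rightarrow> real) set" where
  "convk A = {(\<lambda>i. \<Sum>a\<in>A. c a * a i) | c. (\<forall>a\<in>A. 0 \<le> c a) \<and> (\<Sum>a\<in>A. c a) = 1}"

definition width :: "nat \<Rightarrow> (nat \<Rightarrow> real) set \<Rightarrow> (nat \<Rightarrow> real) \<Rightarrow> real" where
  "width k K u = Sup ((\<lambda>a. dotk k a u) ` K) - Inf ((\<lambda>a. dotk k a u) ` K)"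

abbreviation lebk :: "nat \<Rightarrow> (nat \<Rightarrow> real) measure" where
  "lebk k \<equiv> PiM {..<k} (\<lambda>_. lborel)"

definition unit_ballk :: "nat \<Rightarrow> (nat \<Rightarrow> real) set" where
  "unit_ballk k = {x \<in> space (lebk k). norm2k k x < 1}"

text \<open>The normalised surface measure on S^{k-1} is the image of the uniform
  distribution on the unit ball under x \<mapsto> x/|x| (cone-measure definition of the
  surface measure: mu_{k-1}(E) = k * vol{t x | x \<in> E, 0 < t \<le> 1}).\<close>
definition sphere_avg :: "nat \<Rightarrow> ((nat \<Rightarrow> real) \<Rightarrow> real) \<Rightarrow> real" where
  "sphere_avg k f =
     (LINT x : unit_ballk k | lebk k. f (\<lambda>i. x i / norm2k k x)) / measure (lebk k) (unit_ballk k)"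

definition mean_width :: "nat \<Rightarrow> (nat \<Rightarrow> real) set \<Rightarrow> real" where
  "mean_width k K = sphere_avg k (width k K)"

definition delta_w :: "nat \<Rightarrow> (nat \<Rightarrow> real) set \<Rightarrow> real" where
  "delta_w k A = pi / Beta (real k / 2) (1 / 2) * mean_width k (convk A)"

end

theory Submission
  imports Defs "HOL-Probability.Probability"
begin

text \<open>
  The \<open>\<ell>\<^sub>1\<close> bounds only compare a sum of coordinate ranges with \<open>\<ell>\<^sub>1\<close> norms of differences.
  For the mean width, the key identity is that the sphere average of \<open>\<bar>\<langle>v, u\<rangle>\<bar>\<close> equals
  \<open>B(k/2, 1/2) / \<pi> \<cdot> |v|\<close>. It is obtained by integrating \<open>\<bar>\<langle>v, x\<rangle>\<bar>\<close> against the standard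
  Gaussian on \<open>\<real>\<^sup>k\<close> in two ways: directly, since \<open>\<langle>v, X\<rangle>\<close> is normal with standard deviation
  \<open>|v|\<close>, and in polar coordinates, where the radial factor is a half-line Gaussian moment given
  by the Gamma function. As the width of \<open>conv A\<close> in a unit direction \<open>u\<close> dominates
  \<open>\<bar>\<langle>a - b, u\<rangle>\<bar>\<close> and is at most the Euclidean diameter, \<open>\<delta>\<^sub>w(A)\<close> lies between \<open>diam\<^sub>2 A\<close>
  and \<open>\<pi> / B(k/2, 1/2) \<cdot> diam\<^sub>2 A \<le> 2\<surd>k \<cdot> diam\<^sub>2 A\<close>, the last step by log-convexity of \<open>\<Gamma>\<close>.
  Segments attain the lower bounds and the cross-polytope the \<open>\<ell>\<^sub>1\<close> upper bound; the cube
  \<open>{0,1}\<^sup>k\<close> has width at least \<open>\<Sum>\<^sub>i |u\<^sub>i|\<close> in every direction \<open>u\<close>, whence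
  \<open>\<delta>\<^sub>w \<ge> k = \<surd>k \<cdot> diam\<^sub>2\<close>.
\<close>

lemma norm2k_nonneg: "0 \<le> norm2k k x"
  unfolding norm2k_def by (auto intro!: sum_nonneg)

lemma dotk_diff: "dotk k (\<lambda>i. a i - b i) u = dotk k a u - dotk k b u"
  unfolding dotk_def by (simp add: left_diff_distrib sum_subtractf)

lemma dotk_convex_combination:
  "dotk k (\<lambda>i. \<Sum>a\<in>A. c a * a i) u = (\<Sum>a\<in>A. c a * dotk k a u)"
  unfolding dotk_def
  by (simp add: sum_distrib_right sum_distrib_left mult.assoc sum.swap[of _ "{..<k}"])

lemma abs_dotk_le_norm2k: "\<bar>dotk k a u\<bar> \<le> norm2k k a * norm2k k u"
proof -
  have "(dotk k a u)\<^sup>2 \<le> (\<Sum>i<k. (a i)\<^sup>2) * (\<Sum>i<k. (u i)\<^sup>2)"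
    unfolding dotk_def by (rule Cauchy_Schwarz_ineq_sum)
  then have "sqrt ((dotk k a u)\<^sup>2) \<le> sqrt ((\<Sum>i<k. (a i)\<^sup>2) * (\<Sum>i<k. (u i)\<^sup>2))"
    by (rule real_sqrt_le_mono)
  then show ?thesis unfolding norm2k_def by (simp add: real_sqrt_mult)
qed

lemma abs_dotk_le_of_norm2k_le_1: "norm2k k u \<le> 1 \<Longrightarrow> \<bar>dotk k v u\<bar> \<le> norm2k k v"
  using abs_dotk_le_norm2k[of k v u] mult_left_le[of "norm2k k u" "norm2k k v"] norm2k_nonneg[of k v]
  by linarith

definition coord_vec :: "nat \<Rightarrow> real \<Rightarrow> nat \<Rightarrow> real" where
  "coord_vec i s = (\<lambda>j. if j = i then s else 0)"

lemma sum_coord_vec: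
  assumes "i < k" "\<And>j. g j 0 = 0"
  shows "(\<Sum>j<k. g j (coord_vec i s j)) = g i s"
proof -
  have "(\<Sum>j<k. g j (coord_vec i s j)) = (\<Sum>j<k. if j = i then g i s else 0)"
    using assms(2) by (intro sum.cong) (auto simp: coord_vec_def)
  then show ?thesis using assms(1) by simp
qed

lemma dotk_coord_vec: "i < k \<Longrightarrow> dotk k (coord_vec i s) u = s * u i"
  unfolding dotk_def by (rule sum_coord_vec[where g="\<lambda>j x. x * u j"]) auto

lemma norm1k_coord_vec: "i < k \<Longrightarrow> norm1k k (coord_vec i s) = \<bar>s\<bar>"
  unfolding norm1k_def by (rule sum_coord_vec[where g="\<lambda>j x. \<bar>x\<bar>"]) auto

lemma norm2k_coord_vec: "i < k \<Longrightarrow> norm2k k (coord_vec i s) = \<bar>s\<bar>"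
  unfolding norm2k_def by (subst sum_coord_vec[where g="\<lambda>j x. x\<^sup>2"]) auto

lemma in_Rk_coord_vec: "i < k \<Longrightarrow> in_Rk k (coord_vec i s)"
  unfolding in_Rk_def coord_vec_def by simp

lemma in_Rk_indicator: "S \<subseteq> {..<k} \<Longrightarrow> in_Rk k (indicator S)"
  unfolding in_Rk_def by (auto simp: indicator_def)

lemma finite_pairwise_image: "finite A \<Longrightarrow> finite {f a b | a b. a \<in> A \<and> b \<in> A}"
  by (rule finite_subset[of _ "(\<lambda>(a, b). f a b) ` (A \<times> A)"]) auto

lemma pairwise_Max_ge:
  fixes f :: "'a \<Rightarrow> 'a \<Rightarrow> real"
  shows "finite A \<Longrightarrow> a \<in> A \<Longrightarrow> b \<in> A \<Longrightarrow> f a b \<le> Max (insert 0 {f a b | a b. a \<in> A \<and> b \<in> A})"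
  by (rule Max_ge) (auto intro: finite_pairwise_image)

lemma pairwise_Max_nonneg:
  fixes f :: "'a \<Rightarrow> 'a \<Rightarrow> real"
  shows "finite A \<Longrightarrow> 0 \<le> Max (insert 0 {f a b | a b. a \<in> A \<and> b \<in> A})"
  by (rule Max_ge) (auto intro: finite_pairwise_image)

lemma pairwise_Max_le_iff:
  fixes f :: "'a \<Rightarrow> 'a \<Rightarrow> real"
  shows "finite A \<Longrightarrow>
    Max (insert 0 {f a b | a b. a \<in> A \<and> b \<in> A}) \<le> m \<longleftrightarrow> 0 \<le> m \<and> (\<forall>a\<in>A. \<forall>b\<in>A. f a b \<le> m)"
  by (subst Max_le_iff) (auto intro: finite_pairwise_image)

lemma pairwise_Max_doubleton:
  fixes f :: "'a \<Rightarrow> 'a \<Rightarrow> real"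
  assumes "f a a = 0" "f b b = 0" "f b a = f a b" "0 \<le> f a b"
  shows "Max (insert 0 {f x y | x y. x \<in> {a, b} \<and> y \<in> {a, b}}) = f a b"
proof -
  have "{f x y | x y. x \<in> {a, b} \<and> y \<in> {a, b}} = {f a a, f a b, f b a, f b b}"
    by blast
  then show ?thesis using assms by simp
qed

section \<open>Diameters and the \<open>\<ell>\<^sub>1\<close> diversity\<close>

lemma diam1_le_delta1: "finite A \<Longrightarrow> diam1 k A \<le> delta1 k A"
  unfolding diam1_def delta1_def norm1k_def
  by (auto simp: pairwise_Max_le_iff intro!: sum_nonneg sum_mono pairwise_Max_ge[of A] pairwise_Max_nonneg)

lemma delta1_le_diam1: "finite A \<Longrightarrow> delta1 k A \<le> real k * diam1 k A"
proof -
  assume A: "finite A"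
  have "\<bar>a i - b i\<bar> \<le> diam1 k A" if "i < k" "a \<in> A" "b \<in> A" for i a b
  proof -
    have "\<bar>a i - b i\<bar> \<le> norm1k k (\<lambda>i. a i - b i)"
      unfolding norm1k_def using that(1) by (intro member_le_sum[where f="\<lambda>i. \<bar>a i - b i\<bar>"]) auto
    also have "\<dots> \<le> diam1 k A"
      unfolding diam1_def using A that(2,3) by (rule pairwise_Max_ge)
    finally show ?thesis .
  qed
  moreover have "0 \<le> diam1 k A"
    unfolding diam1_def using A by (rule pairwise_Max_nonneg)
  ultimately have "delta1 k A \<le> (\<Sum>i<k. diam1 k A)"
    unfolding delta1_def using A by (intro sum_mono) (simp add: pairwise_Max_le_iff)
  then show ?thesis by simp
qed

lemma diam1_doubleton: "diam1 k {a, b} = norm1k k (\<lambda>i. a i - b i)"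
  unfolding diam1_def
  by (rule pairwise_Max_doubleton) (auto simp: norm1k_def abs_minus_commute intro: sum_nonneg)

lemma delta1_doubleton: "delta1 k {a, b} = norm1k k (\<lambda>i. a i - b i)"
  unfolding delta1_def norm1k_def
  by (intro sum.cong refl pairwise_Max_doubleton) (auto simp: abs_minus_commute)

lemma diam2_doubleton: "diam2 k {a, b} = norm2k k (\<lambda>i. a i - b i)"
  unfolding diam2_def
  by (rule pairwise_Max_doubleton) (auto simp: norm2k_def power2_commute intro: sum_nonneg)

definition cross_polytope :: "nat \<Rightarrow> (nat \<Rightarrow> real) set" where
  "cross_polytope k = (\<lambda>(i, s). coord_vec i s) ` ({..<k} \<times> {-1, 1})"

lemma finite_cross_polytope: "finite (cross_polytope k)"
  unfolding cross_polytope_def by simp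

lemma coord_vec_mem_cross_polytope: "i < k \<Longrightarrow> s \<in> {-1, 1} \<Longrightarrow> coord_vec i s \<in> cross_polytope k"
  unfolding cross_polytope_def by force

lemma in_Rk_of_mem_cross_polytope: "a \<in> cross_polytope k \<Longrightarrow> in_Rk k a"
  unfolding cross_polytope_def by (auto simp: in_Rk_coord_vec)

lemma abs_le_one_of_mem_cross_polytope: "a \<in> cross_polytope k \<Longrightarrow> \<bar>a j\<bar> \<le> 1"
  unfolding cross_polytope_def coord_vec_def by auto

lemma diam1_cross_polytope:
  assumes "k \<ge> 1" shows "diam1 k (cross_polytope k) = 2"
proof (rule antisym)
  have "norm1k k (\<lambda>j. a j - b j) \<le> 2" if "a \<in> cross_polytope k" "b \<in> cross_polytope k" for a b
  proof -
    have "norm1k k (\<lambda>j. a j - b j) \<le> norm1k k a + norm1k k b"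
      unfolding norm1k_def sum.distrib[symmetric] by (intro sum_mono abs_triangle_ineq4)
    also have "\<dots> = 2"
      using that unfolding cross_polytope_def by (auto simp: norm1k_coord_vec)
    finally show ?thesis .
  qed
  then show "diam1 k (cross_polytope k) \<le> 2"
    unfolding diam1_def by (simp add: pairwise_Max_le_iff finite_cross_polytope)
  have "norm1k k (\<lambda>j. coord_vec 0 1 j - coord_vec 0 (-1) j) = 2"
    using assms norm1k_coord_vec[of 0 k 2] by (simp add: coord_vec_def if_distrib cong: if_cong)
  moreover have "coord_vec 0 1 \<in> cross_polytope k" "coord_vec 0 (-1) \<in> cross_polytope k"
    using assms by (auto intro: coord_vec_mem_cross_polytope)
  note pairwise_Max_ge[OF finite_cross_polytope this, of "\<lambda>a b. norm1k k (\<lambda>j. a j - b j)"]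
  ultimately show "2 \<le> diam1 k (cross_polytope k)"
    unfolding diam1_def by simp
qed

lemma delta1_cross_polytope: "delta1 k (cross_polytope k) = 2 * real k"
proof -
  have "Max (insert 0 {\<bar>a i - b i\<bar> | a b. a \<in> cross_polytope k \<and> b \<in> cross_polytope k}) = 2"
    if "i < k" for i
  proof (rule antisym)
    have "\<bar>a i - b i\<bar> \<le> 2" if "a \<in> cross_polytope k" "b \<in> cross_polytope k" for a b
      using abs_le_one_of_mem_cross_polytope[OF that(1), of i]
        abs_le_one_of_mem_cross_polytope[OF that(2), of i] by linarith
    then show "Max (insert 0 {\<bar>a i - b i\<bar> | a b. a \<in> cross_polytope k \<and> b \<in> cross_polytope k}) \<le> 2"
      by (simp add: pairwise_Max_le_iff finite_cross_polytope)
    have "coord_vec i 1 \<in> cross_polytope k" "coord_vec i (-1) \<in> cross_polytope k"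
      using that by (auto intro: coord_vec_mem_cross_polytope)
    from pairwise_Max_ge[OF finite_cross_polytope this, of "\<lambda>a b. \<bar>a i - b i\<bar>"]
    show "2 \<le> Max (insert 0 {\<bar>a i - b i\<bar> | a b. a \<in> cross_polytope k \<and> b \<in> cross_polytope k})"
      by (simp add: coord_vec_def)
  qed
  then show ?thesis unfolding delta1_def by simp
qed

lemma diam2_cube: "diam2 k (indicator ` Pow {..<k}) = sqrt (real k)"
proof (rule antisym)
  have "(\<Sum>i<k. (a i - b i)\<^sup>2) \<le> (\<Sum>i<k. 1)"
    if "a \<in> indicator ` Pow {..<k}" "b \<in> indicator ` Pow {..<k}" for a b :: "nat \<Rightarrow> real"
    using that by (intro sum_mono) (auto simp: indicator_def)
  then show "diam2 k (indicator ` Pow {..<k}) \<le> sqrt (real k)"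
    unfolding diam2_def norm2k_def by (simp add: pairwise_Max_le_iff)
  have "indicator {..<k} \<in> indicator ` Pow {..<k}" "indicator {} \<in> indicator ` Pow {..<k}"
    by auto
  from pairwise_Max_ge[OF _ this, of "\<lambda>a b. norm2k k (\<lambda>i. a i - b i)"]
  show "sqrt (real k) \<le> diam2 k (indicator ` Pow {..<k})"
    unfolding diam2_def norm2k_def by simp
qed

section \<open>Widths of convex hulls\<close>

lemma mem_convk: "finite A \<Longrightarrow> a \<in> A \<Longrightarrow> a \<in> convk A"
  unfolding convk_def
  by (rule CollectI, rule exI[of _ "\<lambda>b. if b = a then 1 else 0"])
     (auto simp: if_distrib[of "\<lambda>x. x * _"] cong: if_cong)

lemma dotk_convk_bounds:
  assumes "finite A" "p \<in> convk A"
  shows "Min ((\<lambda>a. dotk k a u) ` A) \<le> dotk k p u" "dotk k p u \<le> Max ((\<lambda>a. dotk k a u) ` A)"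
proof -
  from assms(2) obtain c where p: "p = (\<lambda>i. \<Sum>a\<in>A. c a * a i)"
    and c: "\<forall>a\<in>A. 0 \<le> c a" "(\<Sum>a\<in>A. c a) = 1"
    unfolding convk_def by auto
  have "(\<Sum>a\<in>A. c a * Min ((\<lambda>a. dotk k a u) ` A)) \<le> (\<Sum>a\<in>A. c a * dotk k a u)"
    using assms(1) c by (intro sum_mono mult_left_mono) auto
  then show "Min ((\<lambda>a. dotk k a u) ` A) \<le> dotk k p u"
    unfolding p dotk_convex_combination by (simp add: c(2) flip: sum_distrib_right)
  have "(\<Sum>a\<in>A. c a * dotk k a u) \<le> (\<Sum>a\<in>A. c a * Max ((\<lambda>a. dotk k a u) ` A))"
    using assms(1) c by (intro sum_mono mult_left_mono) auto
  then show "dotk k p u \<le> Max ((\<lambda>a. dotk k a u) ` A)"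
    unfolding p dotk_convex_combination by (simp add: c(2) flip: sum_distrib_right)
qed

lemma width_convk:
  assumes A: "finite A" "A \<noteq> {}"
  shows "width k (convk A) u = Max ((\<lambda>a. dotk k a u) ` A) - Min ((\<lambda>a. dotk k a u) ` A)"
proof -
  let ?d = "\<lambda>a. dotk k a u"
  obtain a b where ab: "a \<in> A" "b \<in> A" "?d a = Max (?d ` A)" "?d b = Min (?d ` A)"
    using Max_in[of "?d ` A"] Min_in[of "?d ` A"] A by fastforce
  have "Max (?d ` A) \<in> ?d ` convk A" "Min (?d ` A) \<in> ?d ` convk A"
    using mem_convk[OF A(1)] ab by (metis image_eqI)+
  then have "Sup (?d ` convk A) = Max (?d ` A)" "Inf (?d ` convk A) = Min (?d ` A)"
    by (auto intro!: cSup_eq_maximum cInf_eq_minimum dotk_convk_bounds[OF A(1)] simp del: Max_le_iff)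
  then show ?thesis unfolding width_def by simp
qed

lemma dotk_diff_le_width:
  "finite A \<Longrightarrow> a \<in> A \<Longrightarrow> b \<in> A \<Longrightarrow> dotk k a u - dotk k b u \<le> width k (convk A) u"
  by (subst width_convk) (auto intro!: diff_mono Max_ge Min_le)

lemma abs_dotk_diff_le_width:
  "finite A \<Longrightarrow> a \<in> A \<Longrightarrow> b \<in> A \<Longrightarrow> \<bar>dotk k (\<lambda>i. a i - b i) u\<bar> \<le> width k (convk A) u"
  using dotk_diff_le_width[of A a b k u] dotk_diff_le_width[of A b a k u] by (simp add: dotk_diff)

lemma width_nonneg: "finite A \<Longrightarrow> A \<noteq> {} \<Longrightarrow> 0 \<le> width k (convk A) u"
  using dotk_diff_le_width[of A _ _ k u] by fastforce

lemma width_le_diam2: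
  assumes A: "finite A" "A \<noteq> {}" and u: "norm2k k u \<le> 1"
  shows "width k (convk A) u \<le> diam2 k A"
proof -
  let ?d = "\<lambda>a. dotk k a u"
  obtain a b where ab: "a \<in> A" "b \<in> A" "?d a = Max (?d ` A)" "?d b = Min (?d ` A)"
    using Max_in[of "?d ` A"] Min_in[of "?d ` A"] A by fastforce
  have "width k (convk A) u = dotk k (\<lambda>i. a i - b i) u"
    unfolding width_convk[OF A] dotk_diff ab(3,4) ..
  also have "\<dots> \<le> norm2k k (\<lambda>i. a i - b i) * norm2k k u"
    using abs_dotk_le_norm2k by (rule abs_le_D1)
  also have "\<dots> \<le> norm2k k (\<lambda>i. a i - b i)"
    using u norm2k_nonneg by (simp add: mult_left_le)
  also have "\<dots> \<le> diam2 k A"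
    unfolding diam2_def using A(1) ab(1,2) by (rule pairwise_Max_ge)
  finally show ?thesis .
qed

lemma width_doubleton: "width k (convk {a, b}) u = \<bar>dotk k (\<lambda>i. a i - b i) u\<bar>"
  by (subst width_convk) (auto simp: dotk_diff)

section \<open>Scaling and polar coordinates on \<open>\<real>\<^sup>k\<close>\<close>

text \<open>Scaling is restricted to \<open>{..<k}\<close> so that it maps the extensional points of
  \<open>space (lebk k)\<close> into themselves.\<close>

abbreviation scalek :: "nat \<Rightarrow> real \<Rightarrow> (nat \<Rightarrow> real) \<Rightarrow> nat \<Rightarrow> real" where
  "scalek k t x \<equiv> \<lambda>i\<in>{..<k}. t * x i"

lemma measurable_scalek [measurable]: "scalek k t \<in> lebk k \<rightarrow>\<^sub>M lebk k"
  by measurable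

lemma borel_measurable_norm2k [measurable]: "norm2k k \<in> borel_measurable (lebk k)"
  unfolding norm2k_def[abs_def] by measurable

lemma borel_measurable_dotk [measurable]: "(\<lambda>x. dotk k v x) \<in> borel_measurable (lebk k)"
  unfolding dotk_def by measurable

lemma norm2k_scalek: "t \<ge> 0 \<Longrightarrow> norm2k k (scalek k t x) = t * norm2k k x"
  unfolding norm2k_def by (simp add: power_mult_distrib real_sqrt_mult flip: sum_distrib_left)

lemma space_lebk_eq_UN_cubes:
  "(\<Union>n::nat. Pi\<^sub>E {..<k} (\<lambda>_. {-real n..real n})) = space (lebk k)"
proof (intro equalityI subsetI)
  fix x assume x: "x \<in> space (lebk k)"
  obtain n :: nat where n: "Max (insert 0 ((\<lambda>i. \<bar>x i\<bar>) ` {..<k})) \<le> n"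
    using real_arch_simple by blast
  have "\<bar>x i\<bar> \<le> Max (insert 0 ((\<lambda>i. \<bar>x i\<bar>) ` {..<k}))" if "i < k" for i
    using that by (intro Max_ge) auto
  with n have "x \<in> Pi\<^sub>E {..<k} (\<lambda>_. {-real n..real n})"
    using x by (force simp: space_PiM PiE_iff abs_le_iff)
  then show "x \<in> (\<Union>n. Pi\<^sub>E {..<k} (\<lambda>_. {-real n..real n}))" by blast
qed (auto simp: space_PiM PiE_iff)

lemma emeasure_lborel_vimage_mult:
  fixes t :: real
  assumes "A \<in> sets borel" "t > 0"
  shows "emeasure lborel ((*) t -` A) = ennreal (1/t) * emeasure lborel A"
proof -
  have "emeasure lborel ((*) t -` A) = emeasure (distr lborel borel ((*) t)) A"
    using assms(1) by (subst emeasure_distr) auto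
  also have "\<dots> = emeasure (density lborel (\<lambda>_. ennreal (1/t))) A"
    using assms(2) by (simp add: lborel_distr_mult inverse_eq_divide)
  also have "\<dots> = ennreal (1/t) * emeasure lborel A"
    using assms(1) by (subst emeasure_density_const) auto
  finally show ?thesis .
qed

lemma distr_scalek_lebk:
  fixes t :: real assumes t: "t > 0"
  shows "distr (lebk k) (lebk k) (scalek k t) = density (lebk k) (\<lambda>_. ennreal ((1/t)^k))"
proof (rule measure_eqI_PiM_finite[where I="{..<k}" and M="\<lambda>_. lborel"])
  interpret product_sigma_finite "\<lambda>_::nat. lborel::real measure" by standard
  show "finite {..<k}" by simp
  show "sets (distr (lebk k) (lebk k) (scalek k t)) = sets (lebk k)" by simp
  show "sets (density (lebk k) (\<lambda>_. ennreal ((1/t)^k))) = sets (lebk k)" by simp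
  fix A :: "nat \<Rightarrow> real set" assume A: "\<And>i. i \<in> {..<k} \<Longrightarrow> A i \<in> sets lborel"
  have preimage: "scalek k t -` Pi\<^sub>E {..<k} A \<inter> space (lebk k) = Pi\<^sub>E {..<k} (\<lambda>i. (*) t -` A i)"
    by (auto simp: space_PiM PiE_iff)
  have factor: "emeasure lborel ((*) t -` A i) = ennreal (1/t) * emeasure lborel (A i)"
    if "i \<in> {..<k}" for i
    using A[OF that] t by (intro emeasure_lborel_vimage_mult) auto
  have "emeasure (distr (lebk k) (lebk k) (scalek k t)) (Pi\<^sub>E {..<k} A)
      = (\<Prod>i<k. emeasure lborel ((*) t -` A i))"
    using A measurable_sets_borel[of "(*) t" borel]
    by (subst emeasure_distr) (auto simp: preimage intro!: sets_PiM_I_finite emeasure_PiM)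
  also have "\<dots> = ennreal ((1/t)^k) * (\<Prod>i<k. emeasure lborel (A i))"
    using t factor by (simp add: prod.distrib ennreal_power)
  also have "\<dots> = emeasure (density (lebk k) (\<lambda>_. ennreal ((1/t)^k))) (Pi\<^sub>E {..<k} A)"
    using A by (subst emeasure_density_const, auto intro!: sets_PiM_I_finite) (subst emeasure_PiM; auto)
  finally show "emeasure (distr (lebk k) (lebk k) (scalek k t)) (Pi\<^sub>E {..<k} A) =
      emeasure (density (lebk k) (\<lambda>_. ennreal ((1/t)^k))) (Pi\<^sub>E {..<k} A)" .
next
  interpret product_sigma_finite "\<lambda>_::nat. lborel::real measure" by standard
  let ?A = "\<lambda>n::nat. Pi\<^sub>E {..<k} (\<lambda>_. {-real n..real n})"
  show "range ?A \<subseteq> prod_algebra {..<k} (\<lambda>_. lborel)"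
    by (auto intro!: prod_algebraI_finite)
  show "(\<Union>n. ?A n) = space (lebk k)"
    by (rule space_lebk_eq_UN_cubes)
  fix n :: nat
  have "scalek k t -` ?A n \<inter> space (lebk k) = Pi\<^sub>E {..<k} (\<lambda>_. (*) t -` {-real n..real n})"
    by (auto simp: space_PiM PiE_iff)
  moreover have "(*) t -` {-real n..real n} = {-real n/t..real n/t}"
    using t by (auto simp: field_simps)
  moreover have "- (real n / t) \<le> real n / t" using t by simp
  ultimately show "emeasure (distr (lebk k) (lebk k) (scalek k t)) (?A n) \<noteq> \<infinity>"
    by (subst emeasure_distr[OF measurable_scalek])
       (auto simp: emeasure_PiM ennreal_prod_eq_top power_eq_top_ennreal_iff)
qed

lemma nn_integral_scalek:
  fixes t :: real assumes t: "t > 0" and f[measurable]: "f \<in> borel_measurable (lebk k)"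
  shows "(\<integral>\<^sup>+x. f (scalek k t x) \<partial>lebk k) = ennreal ((1/t)^k) * (\<integral>\<^sup>+x. f x \<partial>lebk k)"
proof -
  have "(\<integral>\<^sup>+x. f (scalek k t x) \<partial>lebk k) = (\<integral>\<^sup>+x. f x \<partial>distr (lebk k) (lebk k) (scalek k t))"
    by (subst nn_integral_distr[OF measurable_scalek]) auto
  also have "\<dots> = (\<integral>\<^sup>+x. ennreal ((1/t)^k) * f x \<partial>lebk k)"
    using t by (simp add: distr_scalek_lebk nn_integral_density)
  also have "\<dots> = ennreal ((1/t)^k) * (\<integral>\<^sup>+x. f x \<partial>lebk k)"
    by (simp add: nn_integral_cmult)
  finally show ?thesis .
qed

lemma nn_integral_norm2k_less:
  fixes g :: "(nat \<Rightarrow> real) \<Rightarrow> ennreal"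
  assumes g[measurable]: "g \<in> borel_measurable (lebk k)"
    and hom: "\<And>x t. x \<in> space (lebk k) \<Longrightarrow> t > 0 \<Longrightarrow> g (scalek k t x) = g x"
    and a: "a > 0"
  shows "(\<integral>\<^sup>+x. g x * indicator {x \<in> space (lebk k). norm2k k x < a} x \<partial>lebk k)
       = ennreal (a^k) * (\<integral>\<^sup>+x. g x * indicator (unit_ballk k) x \<partial>lebk k)"
proof -
  let ?f = "\<lambda>x. g x * indicator {x \<in> space (lebk k). norm2k k x < a} x"
  have "(\<integral>\<^sup>+x. g x * indicator (unit_ballk k) x \<partial>lebk k) = (\<integral>\<^sup>+x. ?f (scalek k a x) \<partial>lebk k)"
  proof (rule nn_integral_cong)
    fix x assume x: "x \<in> space (lebk k)"
    then have "scalek k a x \<in> space (lebk k)" by (simp add: space_PiM)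
    then show "g x * indicator (unit_ballk k) x = ?f (scalek k a x)"
      using x a hom[OF x a] by (auto simp: unit_ballk_def indicator_def norm2k_scalek)
  qed
  also have "\<dots> = ennreal ((1/a)^k) * (\<integral>\<^sup>+x. ?f x \<partial>lebk k)"
    using a by (intro nn_integral_scalek) measurable
  finally have "ennreal (a^k) * (\<integral>\<^sup>+x. g x * indicator (unit_ballk k) x \<partial>lebk k)
      = ennreal (a^k * (1/a)^k) * (\<integral>\<^sup>+x. ?f x \<partial>lebk k)"
    using a by (simp add: ennreal_mult mult.assoc)
  also have "a^k * (1/a)^k = 1"
    using a by (simp add: power_mult_distrib[symmetric])
  finally show ?thesis by simp
qed

lemma nn_integral_power_deriv:
  assumes "a \<ge> 0" "k \<ge> 1"
  shows "(\<integral>\<^sup>+r. ennreal (real k * r^(k-1)) * indicator {0..a} r \<partial>lborel) = ennreal (a^k)"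
proof -
  have "((\<lambda>r. real k * r^(k-1)) has_integral (a^k - 0^k)) {0..a}"
    using assms(1)
    by (intro fundamental_theorem_of_calculus)
       (auto intro!: derivative_eq_intros simp flip: has_real_derivative_iff_has_vector_derivative)
  moreover have "(0::real)^k = 0"
    using assms(2) by simp
  ultimately show ?thesis
    by (intro nn_integral_has_integral_lebesgue') auto
qed

lemma emeasure_radial_density_lessThan:
  assumes "k \<ge> 1"
  shows "emeasure (density lborel (\<lambda>r. J * (indicator {0<..} r * ennreal (real k * r^(k-1))))) {..<a}
    = (if a > 0 then ennreal (a^k) * J else 0)"
proof -
  have "emeasure (density lborel (\<lambda>r. J * (indicator {0<..} r * ennreal (real k * r^(k-1))))) {..<a}
    = (\<integral>\<^sup>+r. J * (indicator {0<..} r * ennreal (real k * r^(k-1))) * indicator {..<a} r \<partial>lborel)"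
    by (subst emeasure_density) auto
  also have "\<dots> = (if a > 0 then ennreal (a^k) * J else 0)"
  proof (cases "a > 0")
    case True
    have "AE r in lborel. J * (indicator {0<..} r * ennreal (real k * r^(k-1))) * indicator {..<a} r
        = J * (ennreal (real k * r^(k-1)) * indicator {0..a} r)"
      using AE_lborel_singleton[of 0] AE_lborel_singleton[of a]
      by eventually_elim (auto simp: indicator_def)
    then have "(\<integral>\<^sup>+r. J * (indicator {0<..} r * ennreal (real k * r^(k-1))) * indicator {..<a} r \<partial>lborel)
        = (\<integral>\<^sup>+r. J * (ennreal (real k * r^(k-1)) * indicator {0..a} r) \<partial>lborel)"
      by (rule nn_integral_cong_AE)
    also have "\<dots> = J * ennreal (a^k)"
      using True assms nn_integral_power_deriv[of a k] by (subst nn_integral_cmult) auto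
    finally show ?thesis using True by (simp add: mult.commute)
  next
    case False
    then have "\<And>r. J * (indicator {0<..} r * ennreal (real k * r^(k-1))) * indicator {..<a} r = 0"
      by (auto simp: indicator_def)
    with False show ?thesis by (simp only: nn_integral_0_iff_AE) simp
  qed
  finally show ?thesis .
qed

lemma emeasure_distr_norm2k_lessThan:
  fixes g :: "(nat \<Rightarrow> real) \<Rightarrow> ennreal"
  assumes g[measurable]: "g \<in> borel_measurable (lebk k)"
    and hom: "\<And>x t. x \<in> space (lebk k) \<Longrightarrow> t > 0 \<Longrightarrow> g (scalek k t x) = g x"
  shows "emeasure (distr (density (lebk k) g) borel (norm2k k)) {..<a}
    = (if a > 0 then ennreal (a^k) * (\<integral>\<^sup>+x. g x * indicator (unit_ballk k) x \<partial>lebk k) else 0)"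
proof -
  have "emeasure (distr (density (lebk k) g) borel (norm2k k)) {..<a}
      = emeasure (density (lebk k) g) {x \<in> space (lebk k). norm2k k x < a}"
    by (subst emeasure_distr) (auto intro!: arg_cong2[where f=emeasure])
  also have "\<dots> = (\<integral>\<^sup>+x. g x * indicator {x \<in> space (lebk k). norm2k k x < a} x \<partial>lebk k)"
    by (subst emeasure_density) auto
  also have "\<dots> = (if a > 0 then ennreal (a^k) * (\<integral>\<^sup>+x. g x * indicator (unit_ballk k) x \<partial>lebk k) else 0)"
  proof (cases "a > 0")
    case True
    then show ?thesis by (simp add: nn_integral_norm2k_less[OF g hom])
  next
    case False
    then have "{x \<in> space (lebk k). norm2k k x < a} = {}"
      using norm2k_nonneg[of k] by (auto simp: not_less intro: order.trans)
    with False show ?thesis by simp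
  qed
  finally show ?thesis .
qed

lemma distr_norm2k_density:
  fixes g :: "(nat \<Rightarrow> real) \<Rightarrow> ennreal"
  assumes k: "k \<ge> 1"
    and g[measurable]: "g \<in> borel_measurable (lebk k)"
    and hom: "\<And>x t. x \<in> space (lebk k) \<Longrightarrow> t > 0 \<Longrightarrow> g (scalek k t x) = g x"
    and fin: "(\<integral>\<^sup>+x. g x * indicator (unit_ballk k) x \<partial>lebk k) < \<infinity>"
  defines "J \<equiv> \<integral>\<^sup>+x. g x * indicator (unit_ballk k) x \<partial>lebk k"
  shows "distr (density (lebk k) g) borel (norm2k k)
    = density lborel (\<lambda>r. J * (indicator {0<..} r * ennreal (real k * r^(k-1))))"
    (is "?\<nu> = ?\<mu>")
proof -
  note \<nu>_lessThan = emeasure_distr_norm2k_lessThan[OF g hom, folded J_def]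
  show ?thesis
  proof (rule measure_eqI_generator_eq_countable[where E="range lessThan" and \<Omega>=UNIV
        and A="range (\<lambda>m::nat. {..<real m})"])
    have "{..<a} \<inter> {..<b} = {..<min a b}" for a b :: real by auto
    then show "Int_stable (range lessThan :: real set set)"
      by (auto simp: Int_stable_def)
    show "sets ?\<nu> = sigma_sets UNIV (range lessThan)" "sets ?\<mu> = sigma_sets UNIV (range lessThan)"
      by (simp_all add: borel_Iio sets_measure_of)
    show "\<And>X. X \<in> range lessThan \<Longrightarrow> emeasure ?\<nu> X = emeasure ?\<mu> X"
      using \<nu>_lessThan emeasure_radial_density_lessThan[OF k] by auto
    show "\<And>X. X \<in> range (\<lambda>m::nat. {..<real m}) \<Longrightarrow> emeasure ?\<nu> X \<noteq> \<infinity>"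
      using \<nu>_lessThan fin unfolding J_def[symmetric]
      by (auto simp: ennreal_mult_eq_top_iff split: if_splits)
    show "\<Union> (range (\<lambda>m::nat. {..<real m})) = UNIV"
      by (auto intro: reals_Archimedean2)
  qed auto
qed

lemma nn_integral_polar:
  fixes g :: "(nat \<Rightarrow> real) \<Rightarrow> ennreal" and \<psi> :: "real \<Rightarrow> ennreal"
  assumes k: "k \<ge> 1"
    and g[measurable]: "g \<in> borel_measurable (lebk k)"
    and hom: "\<And>x t. x \<in> space (lebk k) \<Longrightarrow> t > 0 \<Longrightarrow> g (scalek k t x) = g x"
    and fin: "(\<integral>\<^sup>+x. g x * indicator (unit_ballk k) x \<partial>lebk k) < \<infinity>"
    and \<psi>[measurable]: "\<psi> \<in> borel_measurable borel"
  shows "(\<integral>\<^sup>+x. g x * \<psi> (norm2k k x) \<partial>lebk k) =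
     (\<integral>\<^sup>+x. g x * indicator (unit_ballk k) x \<partial>lebk k) *
     (\<integral>\<^sup>+r. \<psi> r * (indicator {0<..} r * ennreal (real k * r^(k-1))) \<partial>lborel)"
proof -
  have "(\<integral>\<^sup>+x. g x * \<psi> (norm2k k x) \<partial>lebk k) = (\<integral>\<^sup>+r. \<psi> r \<partial>distr (density (lebk k) g) borel (norm2k k))"
    by (subst nn_integral_distr) (auto simp: nn_integral_density)
  also have "\<dots> = (\<integral>\<^sup>+r. (\<integral>\<^sup>+x. g x * indicator (unit_ballk k) x \<partial>lebk k) *
      (\<psi> r * (indicator {0<..} r * ennreal (real k * r^(k-1)))) \<partial>lborel)"
    by (subst distr_norm2k_density[OF k g hom fin]) (auto simp: nn_integral_density mult_ac)
  finally show ?thesis by (simp add: nn_integral_cmult)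
qed

section \<open>Gaussian integrals\<close>

lemma prod_times_indicator_PiE:
  fixes f :: "'i \<Rightarrow> 'a \<Rightarrow> 'b::comm_semiring_1"
  assumes "finite I" "x \<in> extensional I"
  shows "(\<Prod>i\<in>I. f i (x i) * indicator (A i) (x i)) = (\<Prod>i\<in>I. f i (x i)) * indicator (Pi\<^sub>E I A) x"
proof (cases "x \<in> Pi\<^sub>E I A")
  case True
  then show ?thesis by (auto simp: prod.distrib PiE_iff intro!: prod.cong)
next
  case False
  with assms(2) obtain j where "j \<in> I" "x j \<notin> A j" by (auto simp: PiE_iff)
  then have "(\<Prod>i\<in>I. f i (x i) * indicator (A i) (x i)) = 0"
    using assms(1) by (intro prod_zero bexI[of _ j]) auto
  with False show ?thesis by simp
qed

lemma PiM_density_lborel: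
  fixes f :: "'i \<Rightarrow> real \<Rightarrow> ennreal"
  assumes I: "finite I"
    and f[measurable]: "\<And>i. f i \<in> borel_measurable borel"
    and prob: "\<And>i. prob_space (density lborel (f i))"
  shows "PiM I (\<lambda>i. density lborel (f i)) = density (PiM I (\<lambda>_. lborel)) (\<lambda>x. \<Prod>i\<in>I. f i (x i))"
proof (rule measure_eqI_PiM_finite[where M="\<lambda>_. lborel"])
  interpret product_sigma_finite "\<lambda>i. density lborel (f i)"
    using prob by (simp add: product_sigma_finite_def prob_space_imp_sigma_finite)
  interpret L: product_sigma_finite "\<lambda>_::'i. lborel::real measure" by standard
  show "finite I" by (rule I)
  show "sets (PiM I (\<lambda>i. density lborel (f i))) = sets (PiM I (\<lambda>_. lborel))"
    by (intro sets_PiM_cong) auto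
  show "sets (density (PiM I (\<lambda>_. lborel)) (\<lambda>x. \<Prod>i\<in>I. f i (x i))) = sets (PiM I (\<lambda>_. lborel))"
    by simp
  fix A :: "'i \<Rightarrow> real set" assume A: "\<And>i. i \<in> I \<Longrightarrow> A i \<in> sets lborel"
  have "emeasure (PiM I (\<lambda>i. density lborel (f i))) (Pi\<^sub>E I A)
      = (\<Prod>i\<in>I. \<integral>\<^sup>+y. f i y * indicator (A i) y \<partial>lborel)"
    using A I by (subst emeasure_PiM) (auto simp: emeasure_density)
  also have "\<dots> = (\<integral>\<^sup>+x. (\<Prod>i\<in>I. f i (x i) * indicator (A i) (x i)) \<partial>PiM I (\<lambda>_. lborel))"
    using A I by (subst L.product_nn_integral_prod) auto
  also have "\<dots> = (\<integral>\<^sup>+x. (\<Prod>i\<in>I. f i (x i)) * indicator (Pi\<^sub>E I A) x \<partial>PiM I (\<lambda>_. lborel))"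
    by (intro nn_integral_cong prod_times_indicator_PiE I) (auto simp: space_PiM PiE_iff)
  also have "\<dots> = emeasure (density (PiM I (\<lambda>_. lborel)) (\<lambda>x. \<Prod>i\<in>I. f i (x i))) (Pi\<^sub>E I A)"
    using A by (subst emeasure_density) (auto intro!: sets_PiM_I_finite I)
  finally show "emeasure (PiM I (\<lambda>i. density lborel (f i))) (Pi\<^sub>E I A) =
      emeasure (density (PiM I (\<lambda>_. lborel)) (\<lambda>x. \<Prod>i\<in>I. f i (x i))) (Pi\<^sub>E I A)" .
next
  interpret P: prob_space "PiM I (\<lambda>i. density lborel (f i))"
    using prob by (intro prob_space_PiM) auto
  show "range (\<lambda>_::nat. Pi\<^sub>E I (\<lambda>_. UNIV::real set)) \<subseteq> prod_algebra I (\<lambda>_. lborel)"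
    by (auto intro!: prod_algebraI_finite I)
  show "(\<Union>n::nat. Pi\<^sub>E I (\<lambda>_. UNIV::real set)) = space (PiM I (\<lambda>_. lborel))"
    by (simp add: space_PiM)
  show "emeasure (PiM I (\<lambda>i. density lborel (f i))) (Pi\<^sub>E I (\<lambda>_. UNIV)) \<noteq> \<infinity>" for n :: nat
    by simp
qed

abbreviation std_normal :: "real measure" where
  "std_normal \<equiv> density lborel (\<lambda>x. ennreal (std_normal_density x))"

lemma prob_space_std_normal: "prob_space std_normal"
  using prob_space_normal_density[where \<sigma>=1 and \<mu>=0] by simp

lemma PiM_std_normal:
  "PiM {..<k} (\<lambda>_. std_normal) = density (lebk k) (\<lambda>x. \<Prod>i<k. ennreal (std_normal_density (x i)))"
  by (rule PiM_density_lborel) (auto intro: prob_space_std_normal)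

lemma prod_std_normal_density:
  "(\<Prod>i<k. std_normal_density (x i)) = (1 / sqrt (2*pi))^k * exp (- (norm2k k x)\<^sup>2 / 2)"
proof -
  have "(\<Prod>i<k. std_normal_density (x i)) = (\<Prod>i<k. (1 / sqrt (2*pi)) * exp (- (x i)\<^sup>2 / 2))"
    by (simp add: std_normal_density_def)
  also have "\<dots> = (1 / sqrt (2*pi))^k * (\<Prod>i<k. exp (- (x i)\<^sup>2 / 2))"
    by (simp only: prod.distrib prod_constant card_lessThan)
  also have "(\<Prod>i<k. exp (- (x i)\<^sup>2 / 2)) = exp (\<Sum>i<k. - (x i)\<^sup>2 / 2)"
    by (simp add: exp_sum)
  also have "(\<Sum>i<k. - (x i)\<^sup>2 / 2) = - (norm2k k x)\<^sup>2 / 2"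
    unfolding norm2k_def by (simp add: sum_nonneg sum_negf sum_divide_distrib[symmetric])
  finally show ?thesis .
qed

lemma distr_std_normal_component:
  assumes "i < k"
  shows "distr (PiM {..<k} (\<lambda>_. std_normal)) borel (\<lambda>x. x i) = std_normal"
proof -
  have "distr (PiM {..<k} (\<lambda>_. std_normal)) borel (\<lambda>x. x i)
      = distr (PiM {..<k} (\<lambda>_. std_normal)) std_normal (\<lambda>x. x i)"
    by (rule distr_cong) auto
  also have "\<dots> = std_normal"
    using assms prob_space_std_normal by (intro distr_PiM_component) auto
  finally show ?thesis .
qed

lemma indep_vars_std_normal_components:
  fixes J :: "nat set"
  assumes "finite J" "J \<subseteq> {..<k}" "J \<noteq> {}"
  shows "prob_space.indep_vars (PiM {..<k} (\<lambda>_. std_normal)) (\<lambda>_. borel) (\<lambda>i x. x i) J"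
proof -
  let ?P = "PiM {..<k} (\<lambda>_. std_normal)"
  interpret N: prob_space ?P by (intro prob_space_PiM prob_space_std_normal)
  interpret PP: product_prob_space "\<lambda>_::nat. std_normal"
    by (simp add: product_prob_space_def product_sigma_finite_def prob_space_imp_sigma_finite
        product_prob_space_axioms_def prob_space_std_normal)
  have "distr ?P (PiM J (\<lambda>_. borel)) (\<lambda>x. \<lambda>i\<in>J. x i) = distr ?P (PiM J (\<lambda>_. std_normal)) (\<lambda>x. restrict x J)"
  proof (rule distr_cong)
    show "sets (PiM J (\<lambda>_. borel)) = sets (PiM J (\<lambda>_. std_normal))"
      by (rule sets_PiM_cong) auto
  qed auto
  also have "\<dots> = PiM J (\<lambda>_. std_normal)"
    using assms by (intro PP.distr_restrict[symmetric]) auto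
  also have "\<dots> = PiM J (\<lambda>i. distr ?P borel (\<lambda>x. x i))"
    using assms by (intro PiM_cong) (auto simp: distr_std_normal_component)
  finally show ?thesis
    using assms measurable_component_singleton[of _ "{..<k}" "\<lambda>_. std_normal"]
    by (subst N.indep_vars_iff_distr_eq_PiM') (auto cong: measurable_cong_sets)
qed

lemma distributed_dotk_std_normal:
  assumes v: "norm2k k v > 0"
  shows "distributed (PiM {..<k} (\<lambda>_. std_normal)) lborel (dotk k v) (normal_density 0 (norm2k k v))"
proof -
  let ?P = "PiM {..<k} (\<lambda>_. std_normal)"
  interpret N: prob_space ?P by (intro prob_space_PiM prob_space_std_normal)
  define J where "J = {i \<in> {..<k}. v i \<noteq> 0}"
  have sum_J: "(\<Sum>i\<in>J. g i) = (\<Sum>i<k. g i)" if "\<And>i. v i = 0 \<Longrightarrow> g i = 0" for g :: "nat \<Rightarrow> real"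
    unfolding J_def using that by (intro sum.mono_neutral_left) auto
  have norm_J: "sqrt (\<Sum>i\<in>J. \<bar>v i\<bar>\<^sup>2) = norm2k k v"
    unfolding norm2k_def by (simp add: sum_J)
  have "J \<noteq> {}"
    using v norm_J by auto
  have J: "finite J" "J \<subseteq> {..<k}"
    by (auto simp: J_def)
  have [measurable]: "(\<lambda>x. x i) \<in> ?P \<rightarrow>\<^sub>M borel" if "i < k" for i
    using that measurable_component_singleton[of i "{..<k}" "\<lambda>_. std_normal"]
    by (simp cong: measurable_cong_sets)
  have "N.indep_vars (\<lambda>_. borel) (\<lambda>i x. x i) J"
    using J \<open>J \<noteq> {}\<close> by (rule indep_vars_std_normal_components)
  then have "N.indep_vars (\<lambda>_. borel) (\<lambda>i x. v i * x i) J"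
    using N.indep_vars_compose2[of "\<lambda>_. borel" "\<lambda>i x. x i" J "\<lambda>i y. v i * y" "\<lambda>_. borel"] by simp
  moreover have "distributed ?P lborel (\<lambda>x. v i * x i) (normal_density 0 \<bar>v i\<bar>)" if "i \<in> J" for i
  proof -
    have "distributed ?P lborel (\<lambda>x. x i) (normal_density 0 1)"
      using that J distr_std_normal_component[of i k] unfolding distributed_def
      by (auto simp: distr_cong[OF refl, of lborel borel])
    then show ?thesis
      using N.normal_density_affine[of "\<lambda>x. x i" 0 1 "v i" 0] that by (auto simp: J_def)
  qed
  ultimately have "distributed ?P lborel (\<lambda>x. \<Sum>i\<in>J. v i * x i)
      (normal_density (\<Sum>i\<in>J. 0) (sqrt (\<Sum>i\<in>J. \<bar>v i\<bar>\<^sup>2)))"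
    using N.sum_indep_normal[where I=J and X="\<lambda>i x. v i * x i" and \<sigma>="\<lambda>i. \<bar>v i\<bar>" and \<mu>="\<lambda>_. 0"]
      J \<open>J \<noteq> {}\<close> by (simp add: J_def)
  then have "distributed ?P lborel (\<lambda>x. \<Sum>i\<in>J. v i * x i) (normal_density 0 (norm2k k v))"
    by (simp only: norm_J sum.neutral_const)
  moreover have "(\<lambda>x. \<Sum>i\<in>J. v i * x i) = dotk k v"
    by (auto simp: dotk_def sum_J fun_eq_iff)
  ultimately show ?thesis by simp
qed

lemma nn_integral_abs_dotk_std_normal:
  "(\<integral>\<^sup>+x. ennreal \<bar>dotk k v x\<bar> \<partial>PiM {..<k} (\<lambda>_. std_normal)) = ennreal (norm2k k v * sqrt (2/pi))"
proof (cases "norm2k k v = 0")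
  case True
  then have "v i = 0" if "i < k" for i
    using that by (auto simp: norm2k_def sum_nonneg_eq_0_iff)
  then have "dotk k v x = 0" for x
    unfolding dotk_def by simp
  with True show ?thesis by simp
next
  case False
  then have v: "norm2k k v > 0"
    using norm2k_nonneg[of k v] by simp
  have "(\<integral>\<^sup>+x. ennreal \<bar>dotk k v x\<bar> \<partial>PiM {..<k} (\<lambda>_. std_normal))
      = (\<integral>\<^sup>+y. ennreal (normal_density 0 (norm2k k v) y) * ennreal \<bar>y\<bar> \<partial>lborel)"
    by (subst distributed_nn_integral[OF distributed_dotk_std_normal[OF v]]) auto
  also have "\<dots> = (\<integral>\<^sup>+y. ennreal (normal_density 0 (norm2k k v) y * \<bar>y - 0\<bar>^(2*0+1)) \<partial>lborel)"
    by (intro nn_integral_cong) (simp add: ennreal_mult)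
  also have "\<dots> = ennreal (norm2k k v * sqrt (2/pi))"
    using normal_moment_abs_odd[OF v, of 0 0]
    by (subst nn_integral_eq_integral) (auto simp: has_bochner_integral_iff)
  finally show ?thesis .
qed

section \<open>Absolute moments of the standard normal distribution\<close>

lemma Gamma_real_plus1: "x > 0 \<Longrightarrow> Gamma (x + 1) = x * Gamma (x::real)"
  by (rule Gamma_plus1) (auto dest: nonpos_Ints_nonpos)

lemma Gamma_half_integer: "Gamma (real i + 1/2) = fact (2*i) * sqrt pi / (4^i * fact i)"
proof -
  have "Gamma (real i + 1/2) * (4^i * fact i) = fact (2*i) * sqrt pi"
  proof (induction i)
    case 0
    then show ?case by (simp add: Gamma_one_half_real)
  next
    case (Suc i)
    have "Gamma (real (Suc i) + 1/2) = (real i + 1/2) * Gamma (real i + 1/2)"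
      using Gamma_real_plus1[of "real i + 1/2"] by (simp add: algebra_simps)
    moreover have "(fact (2 * Suc i) :: real) = (2 * real i + 2) * (2 * real i + 1) * fact (2*i)"
      by (simp only: mult_Suc_right add_2_eq_Suc' fact_Suc) (simp add: algebra_simps)
    ultimately have "Gamma (real (Suc i) + 1/2) * (4 ^ Suc i * fact (Suc i)) - fact (2 * Suc i) * sqrt pi
        = (2 * real i + 2) * (2 * real i + 1) * (Gamma (real i + 1/2) * (4^i * fact i) - fact (2*i) * sqrt pi)"
      by (simp add: algebra_simps)
    then show ?case
      using Suc.IH by simp
  qed
  then show ?thesis
    by (simp add: field_simps)
qed

lemma std_normal_abs_moment:
  "(\<integral>x. std_normal_density x * \<bar>x\<bar>^j \<partial>lborel) = 2 powr (real j / 2) * Gamma ((real j + 1) / 2) / sqrt pi"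
proof (cases "even j")
  case True
  then obtain i where j: "j = 2*i" by (elim evenE)
  have "(\<integral>x. std_normal_density x * \<bar>x\<bar>^j \<partial>lborel) = fact (2*i) / (2^i * fact i)"
    unfolding j by (simp add: power_even_abs integral_std_normal_moment_even)
  also have "\<dots> = 2^i * Gamma (real i + 1/2) / sqrt pi"
  proof -
    have "(4::real)^i = 2^i * 2^i"
      by (simp flip: power_mult_distrib)
    then show ?thesis
      unfolding Gamma_half_integer by (simp add: field_simps)
  qed
  finally show ?thesis
    by (simp add: j powr_realpow add_divide_distrib)
next
  case False
  then obtain i where j: "j = 2*i + 1" by (elim oddE)
  have "(\<integral>x. std_normal_density x * \<bar>x\<bar>^j \<partial>lborel) = sqrt (2/pi) * 2^i * fact i"
    unfolding j by (rule integral_std_normal_moment_abs_odd)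
  also have "\<dots> = 2 powr (real i + 1/2) * Gamma (real i + 1) / sqrt pi"
    using Gamma_fact[of i, where 'a=real]
    by (simp add: powr_add powr_realpow real_sqrt_divide powr_half_sqrt add.commute)
  finally show ?thesis
    by (simp add: j add_divide_distrib add.commute)
qed

lemma nn_integral_lborel_symmetric:
  fixes f :: "real \<Rightarrow> real"
  assumes [measurable]: "f \<in> borel_measurable borel" and "\<And>r. f (- r) = f r"
  shows "(\<integral>\<^sup>+r. ennreal (f r) \<partial>lborel) = 2 * (\<integral>\<^sup>+r. ennreal (f r) * indicator {0<..} r \<partial>lborel)"
proof -
  have "(\<integral>\<^sup>+r. ennreal (f r) * indicator {..0} r \<partial>lborel)
      = ennreal \<bar>-1\<bar> * (\<integral>\<^sup>+r. ennreal (f (0 + -1 * r)) * indicator {..0} (0 + -1 * r) \<partial>lborel)"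
    by (rule nn_integral_real_affine) auto
  also have "\<dots> = (\<integral>\<^sup>+r. ennreal (f r) * indicator {0..} r \<partial>lborel)"
    using assms(2) by (auto intro!: nn_integral_cong simp: indicator_def)
  also have "\<dots> = (\<integral>\<^sup>+r. ennreal (f r) * indicator {0<..} r \<partial>lborel)"
    by (intro nn_integral_cong_AE)
       (use AE_lborel_singleton[of 0] in \<open>eventually_elim, auto simp: indicator_def\<close>)
  finally have reflect: "(\<integral>\<^sup>+r. ennreal (f r) * indicator {..0} r \<partial>lborel)
      = (\<integral>\<^sup>+r. ennreal (f r) * indicator {0<..} r \<partial>lborel)" .
  have "(\<integral>\<^sup>+r. ennreal (f r) \<partial>lborel)
      = (\<integral>\<^sup>+r. ennreal (f r) * indicator {0<..} r \<partial>lborel) + (\<integral>\<^sup>+r. ennreal (f r) * indicator {..0} r \<partial>lborel)"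
    by (subst nn_integral_add[symmetric]) (auto intro!: nn_integral_cong simp: indicator_def)
  then show ?thesis
    unfolding reflect by (simp only: mult_2)
qed

definition half_gaussian_moment :: "nat \<Rightarrow> real" where
  "half_gaussian_moment j = 2 powr ((real j - 1) / 2) * Gamma ((real j + 1) / 2)"

lemma half_gaussian_moment_pos: "half_gaussian_moment j > 0"
  unfolding half_gaussian_moment_def by simp

lemma nn_integral_abs_power_gaussian:
  "(\<integral>\<^sup>+r. ennreal (\<bar>r\<bar>^j * exp (- r\<^sup>2 / 2)) \<partial>lborel) = ennreal (2 * half_gaussian_moment j)"
proof -
  have "(\<integral>\<^sup>+r. ennreal (\<bar>r\<bar>^j * exp (- r\<^sup>2 / 2)) \<partial>lborel)
      = (\<integral>\<^sup>+r. ennreal (sqrt (2*pi)) * ennreal (std_normal_density r * \<bar>r\<bar>^j) \<partial>lborel)"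
    by (intro nn_integral_cong) (simp add: std_normal_density_def ennreal_mult[symmetric] field_simps)
  also have "\<dots> = ennreal (sqrt (2*pi)) * (\<integral>\<^sup>+r. ennreal (std_normal_density r * \<bar>r\<bar>^j) \<partial>lborel)"
    by (subst nn_integral_cmult) auto
  also have "(\<integral>\<^sup>+r. ennreal (std_normal_density r * \<bar>r\<bar>^j) \<partial>lborel)
      = ennreal (\<integral>r. std_normal_density r * \<bar>r\<bar>^j \<partial>lborel)"
    by (intro nn_integral_eq_integral integrable_std_normal_moment_abs) auto
  also have "ennreal (sqrt (2*pi)) * ennreal (\<integral>r. std_normal_density r * \<bar>r\<bar>^j \<partial>lborel)
      = ennreal (2 * half_gaussian_moment j)"
  proof -
    have "sqrt 2 * 2 powr (real j / 2) = 2 powr (1/2 + real j / 2)"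
      by (simp add: powr_add powr_half_sqrt)
    also have "1/2 + real j / 2 = 1 + (real j - 1) / 2"
      by (simp add: field_simps)
    also have "2 powr (1 + (real j - 1) / 2) = 2 * 2 powr ((real j - 1) / 2)"
      by (simp add: powr_add)
    finally have "sqrt (2*pi) * (2 powr (real j / 2) * Gamma ((real j + 1) / 2) / sqrt pi)
        = 2 * half_gaussian_moment j"
      unfolding half_gaussian_moment_def by (simp add: real_sqrt_mult)
    then show ?thesis
      by (subst ennreal_mult[symmetric]) (simp_all add: std_normal_abs_moment)
  qed
  finally show ?thesis .
qed

lemma nn_integral_half_gaussian_moment:
  "(\<integral>\<^sup>+r. ennreal (r^j * exp (- r\<^sup>2 / 2)) * indicator {0<..} r \<partial>lborel)
    = ennreal (half_gaussian_moment j)"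
proof -
  have "2 * (\<integral>\<^sup>+r. ennreal (\<bar>r\<bar>^j * exp (- r\<^sup>2 / 2)) * indicator {0<..} r \<partial>lborel)
      = (\<integral>\<^sup>+r. ennreal (\<bar>r\<bar>^j * exp (- r\<^sup>2 / 2)) \<partial>lborel)"
    by (rule nn_integral_lborel_symmetric[symmetric]) auto
  also have "\<dots> = 2 * ennreal (half_gaussian_moment j)"
    unfolding nn_integral_abs_power_gaussian using half_gaussian_moment_pos[of j] by (simp add: ennreal_mult)
  finally have "(\<integral>\<^sup>+r. ennreal (\<bar>r\<bar>^j * exp (- r\<^sup>2 / 2)) * indicator {0<..} r \<partial>lborel)
      = ennreal (half_gaussian_moment j)"
    by (subst (asm) ennreal_mult_cancel_left) auto
  moreover have "(\<integral>\<^sup>+r. ennreal (r^j * exp (- r\<^sup>2 / 2)) * indicator {0<..} r \<partial>lborel)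
      = (\<integral>\<^sup>+r. ennreal (\<bar>r\<bar>^j * exp (- r\<^sup>2 / 2)) * indicator {0<..} r \<partial>lborel)"
    by (intro nn_integral_cong) (auto simp: indicator_def)
  ultimately show ?thesis
    by simp
qed

lemma half_gaussian_moment_ratio:
  assumes "k \<ge> 1"
  shows "sqrt (2/pi) * half_gaussian_moment (k - 1) / half_gaussian_moment k = Beta (real k / 2) (1/2) / pi"
proof -
  define p where "p = 2 powr ((real k - 1) / 2)"
  have "(real (k - 1) - 1) / 2 = (real k - 1) / 2 - 1/2" "(real (k - 1) + 1) / 2 = real k / 2"
    using assms by (simp_all add: of_nat_diff field_simps)
  moreover have "2 powr ((real k - 1) / 2 - 1/2) = p / sqrt 2"
    unfolding p_def by (simp add: powr_diff powr_half_sqrt)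
  ultimately have "half_gaussian_moment (k - 1) = p / sqrt 2 * Gamma (real k / 2)"
    unfolding half_gaussian_moment_def by (simp only:)
  moreover have "half_gaussian_moment k = p * Gamma ((real k + 1) / 2)"
    unfolding half_gaussian_moment_def p_def ..
  moreover have "Beta (real k / 2) (1/2) = Gamma (real k / 2) * sqrt pi / Gamma ((real k + 1) / 2)"
    unfolding Beta_def Gamma_one_half_real by (simp add: add_divide_distrib)
  moreover have "sqrt (2/pi) = sqrt 2 / sqrt pi" "pi = sqrt pi * sqrt pi"
    by (simp_all add: real_sqrt_divide)
  moreover have "p > 0" "Gamma ((real k + 1) / 2) > 0"
    unfolding p_def by simp_all
  moreover have "(q / s) * (p / q * G) / (p * G') = G * s / G' / (s * s)"
    if "p > 0" "q > 0" "s > 0" "G' > 0" for p q s G G' :: real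
    using that by (simp add: field_simps)
  ultimately show ?thesis
    by (metis real_sqrt_gt_0_iff pi_gt_zero zero_less_numeral)
qed

lemma Gamma_plus_half_le: "a > 0 \<Longrightarrow> Gamma (a + 1/2) \<le> sqrt a * Gamma (a::real)"
proof -
  assume a: "a > 0"
  have "(ln \<circ> Gamma) ((1 - 1/2) *\<^sub>R a + (1/2) *\<^sub>R (a + 1))
      \<le> (1 - 1/2) * (ln \<circ> Gamma) a + (1/2) * (ln \<circ> Gamma) (a + 1)"
    using a by (intro convex_onD[OF log_convex_Gamma_real]) auto
  then have "ln (Gamma (a + 1/2)) \<le> (ln (Gamma a) + ln (Gamma (a + 1))) / 2"
    by (simp add: algebra_simps add_divide_distrib)
  also have "\<dots> = ln (sqrt a * Gamma a)"
    using a by (simp add: Gamma_real_plus1 ln_mult_pos ln_sqrt)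
  finally show ?thesis
    using a by (simp add: ln_le_cancel_iff)
qed

lemma Beta_half_pos: "a > 0 \<Longrightarrow> Beta a (1/2) > (0::real)"
  unfolding Beta_def by simp

lemma pi_div_Beta_half_le: "k \<ge> 1 \<Longrightarrow> pi / Beta (real k / 2) (1/2) \<le> 2 * sqrt (real k)"
proof -
  assume k: "k \<ge> 1"
  define a where "a = real k / 2"
  have a: "a > 0"
    using k by (simp add: a_def)
  have "pi / Beta a (1/2) = (pi / sqrt pi) * (Gamma (a + 1/2) / Gamma a)"
    unfolding Beta_def by (simp add: Gamma_one_half_real)
  also have "\<dots> = sqrt pi * (Gamma (a + 1/2) / Gamma a)"
    using real_div_sqrt[of pi] by simp
  also have "\<dots> \<le> sqrt pi * sqrt a"
    using Gamma_plus_half_le[OF a] a by (intro mult_left_mono) (auto simp: field_simps)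
  also have "\<dots> = sqrt (pi / 2) * sqrt (real k)"
    unfolding a_def by (simp add: real_sqrt_mult[symmetric])
  also have "\<dots> \<le> 2 * sqrt (real k)"
    using pi_less_4 by (intro mult_right_mono) (auto simp: real_le_lsqrt)
  finally show ?thesis
    unfolding a_def .
qed

section \<open>Averages over the unit sphere\<close>

abbreviation direction :: "nat \<Rightarrow> (nat \<Rightarrow> real) \<Rightarrow> nat \<Rightarrow> real" where
  "direction k x \<equiv> \<lambda>i. x i / norm2k k x"

lemma dotk_direction: "dotk k v (direction k x) = dotk k v x / norm2k k x"
  unfolding dotk_def by (simp add: sum_divide_distrib)

lemma dotk_direction_scalek:
  assumes "t > 0" shows "dotk k v (direction k (scalek k t x)) = dotk k v (direction k x)"
proof -
  have "direction k (scalek k t x) i = direction k x i" if "i < k" for i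
    using assms that unfolding norm2k_scalek[OF less_imp_le[OF assms]] by simp
  then show ?thesis
    unfolding dotk_def by (intro sum.cong) auto
qed

lemma borel_measurable_dotk_direction [measurable]:
  "(\<lambda>x. dotk k v (direction k x)) \<in> borel_measurable (lebk k)"
  unfolding dotk_direction by measurable

lemma norm2k_direction_le: "norm2k k (direction k x) \<le> 1"
proof (cases "norm2k k x = 0")
  case False
  then have "(\<Sum>i<k. (x i / norm2k k x)\<^sup>2) = (\<Sum>i<k. (x i)\<^sup>2) / (norm2k k x)\<^sup>2"
    by (simp add: power_divide sum_divide_distrib)
  also have "\<dots> = 1"
    using False unfolding norm2k_def by (simp add: sum_nonneg)
  finally show ?thesis
    unfolding norm2k_def by simp
qed (simp add: norm2k_def)

lemma sets_unit_ballk [measurable]: "unit_ballk k \<in> sets (lebk k)"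
  unfolding unit_ballk_def by measurable

lemma unit_ballk_subset_cube: "unit_ballk k \<subseteq> Pi\<^sub>E {..<k} (\<lambda>_. {-1..1})"
proof
  fix x assume x: "x \<in> unit_ballk k"
  have "\<bar>x i\<bar> \<le> 1" if "i < k" for i
  proof -
    have "(x i)\<^sup>2 \<le> (\<Sum>j<k. (x j)\<^sup>2)"
      using that by (intro member_le_sum) auto
    also have "\<dots> = (norm2k k x)\<^sup>2"
      unfolding norm2k_def by (simp add: sum_nonneg)
    also have "\<dots> \<le> 1"
      using x norm2k_nonneg[of k x] by (simp add: unit_ballk_def power_le_one)
    finally show ?thesis by (simp add: abs_square_le_1)
  qed
  then show "x \<in> Pi\<^sub>E {..<k} (\<lambda>_. {-1..1})"
    using x by (auto simp: unit_ballk_def space_PiM PiE_iff abs_le_iff)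
qed

lemma emeasure_unit_ballk_finite: "emeasure (lebk k) (unit_ballk k) < \<infinity>"
proof -
  interpret product_sigma_finite "\<lambda>_::nat. lborel::real measure" by standard
  have "emeasure (lebk k) (unit_ballk k) \<le> emeasure (lebk k) (Pi\<^sub>E {..<k} (\<lambda>_. {-1..1}))"
    by (intro emeasure_mono unit_ballk_subset_cube) (auto intro!: sets_PiM_I_finite)
  also have "\<dots> = (\<Prod>i<k. emeasure lborel {-1..1::real})"
    by (subst emeasure_PiM) auto
  also have "\<dots> < \<infinity>"
    by (simp add: power_less_top_ennreal)
  finally show ?thesis .
qed

lemma nn_integral_radial_gaussian:
  assumes "c \<ge> 0" "k \<ge> 1"
  shows "(\<integral>\<^sup>+r. ennreal (c * r^m * exp (- r\<^sup>2 / 2)) * (indicator {0<..} r * ennreal (real k * r^(k-1))) \<partial>lborel)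
     = ennreal (c * real k * half_gaussian_moment (m + k - 1))"
proof -
  have "r^m * r^(k-1) = r^(m+k-1)" for r :: real
    using assms(2) by (simp add: power_add[symmetric])
  then have "(\<integral>\<^sup>+r. ennreal (c * r^m * exp (- r\<^sup>2 / 2)) * (indicator {0<..} r * ennreal (real k * r^(k-1))) \<partial>lborel)
      = (\<integral>\<^sup>+r. ennreal (c * real k) * (ennreal (r^(m+k-1) * exp (- r\<^sup>2 / 2)) * indicator {0<..} r) \<partial>lborel)"
    using assms(1)
    by (intro nn_integral_cong) (auto simp: indicator_def ennreal_mult[symmetric] mult_ac)
  also have "\<dots> = ennreal (c * real k) * (\<integral>\<^sup>+r. ennreal (r^(m+k-1) * exp (- r\<^sup>2 / 2)) * indicator {0<..} r \<partial>lborel)"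
    by (rule nn_integral_cmult) simp
  also have "\<dots> = ennreal (c * real k) * ennreal (half_gaussian_moment (m + k - 1))"
    by (simp only: nn_integral_half_gaussian_moment)
  finally show ?thesis
    using assms(1) less_imp_le[OF half_gaussian_moment_pos] by (simp add: ennreal_mult)
qed

lemma ennreal_eq_divide_if_mult_eq:
  assumes "J * ennreal r = ennreal e" "r > 0" "e \<ge> 0"
  shows "J = ennreal (e / r)"
proof -
  have "J = J * ennreal r * ennreal (1 / r)"
    using assms(2) by (simp add: mult.assoc ennreal_mult[symmetric])
  also have "\<dots> = ennreal (e / r)"
    using assms by (simp add: ennreal_mult[symmetric])
  finally show ?thesis .
qed

lemma emeasure_unit_ballk:
  assumes k: "k \<ge> 1"
  shows "emeasure (lebk k) (unit_ballk k) = ennreal (sqrt (2*pi)^k / (real k * half_gaussian_moment (k - 1)))"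
proof -
  let ?c = "(1 / sqrt (2*pi))^k"
  let ?\<psi> = "\<lambda>r. ennreal (?c * r^0 * exp (- r\<^sup>2 / 2))"
  have polar: "(\<integral>\<^sup>+x. 1 * ?\<psi> (norm2k k x) \<partial>lebk k) =
     (\<integral>\<^sup>+x. 1 * indicator (unit_ballk k) x \<partial>lebk k) *
     (\<integral>\<^sup>+r. ?\<psi> r * (indicator {0<..} r * ennreal (real k * r^(k-1))) \<partial>lborel)"
    using emeasure_unit_ballk_finite by (intro nn_integral_polar k) auto
  have gaussian: "(\<integral>\<^sup>+x. 1 * ?\<psi> (norm2k k x) \<partial>lebk k) = 1"
  proof -
    have "(\<integral>\<^sup>+x. 1 * ?\<psi> (norm2k k x) \<partial>lebk k) = emeasure (PiM {..<k} (\<lambda>_. std_normal)) (space (lebk k))"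
      unfolding PiM_std_normal
      by (subst emeasure_density) (auto intro!: nn_integral_cong simp: prod_ennreal prod_std_normal_density)
    also have "\<dots> = 1"
      using prob_space.emeasure_space_1[OF prob_space_PiM[OF prob_space_std_normal]]
      by (simp add: space_PiM)
    finally show ?thesis .
  qed
  have radial: "(\<integral>\<^sup>+r. ?\<psi> r * (indicator {0<..} r * ennreal (real k * r^(k-1))) \<partial>lborel)
      = ennreal (?c * real k * half_gaussian_moment (0 + k - 1))"
    using k by (intro nn_integral_radial_gaussian) auto
  have "emeasure (lebk k) (unit_ballk k) * ennreal (?c * real k * half_gaussian_moment (k - 1)) = 1"
    using polar unfolding gaussian radial by simp
  then have "emeasure (lebk k) (unit_ballk k) = ennreal (1 / (?c * real k * half_gaussian_moment (k - 1)))"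
    using half_gaussian_moment_pos[of "k - 1"] k by (intro ennreal_eq_divide_if_mult_eq) auto
  also have "1 / (?c * real k * half_gaussian_moment (k - 1)) = sqrt (2*pi)^k / (real k * half_gaussian_moment (k - 1))"
    by (simp add: power_one_over)
  finally show ?thesis .
qed

lemma nn_integral_abs_dotk_direction_finite:
  "(\<integral>\<^sup>+x. ennreal \<bar>dotk k v (direction k x)\<bar> * indicator (unit_ballk k) x \<partial>lebk k) < \<infinity>"
proof -
  have "(\<integral>\<^sup>+x. ennreal \<bar>dotk k v (direction k x)\<bar> * indicator (unit_ballk k) x \<partial>lebk k)
      \<le> (\<integral>\<^sup>+x. ennreal (norm2k k v) * indicator (unit_ballk k) x \<partial>lebk k)"
    using abs_dotk_le_of_norm2k_le_1[OF norm2k_direction_le]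
    by (intro nn_integral_mono) (auto intro!: mult_right_mono ennreal_leI simp: indicator_def)
  also have "\<dots> = ennreal (norm2k k v) * emeasure (lebk k) (unit_ballk k)"
    by (subst nn_integral_cmult_indicator) auto
  also have "\<dots> < \<infinity>"
    using emeasure_unit_ballk_finite by (simp add: ennreal_mult_less_top)
  finally show ?thesis .
qed

lemma abs_dotk_direction_times_gaussian:
  "ennreal \<bar>dotk k v (direction k x)\<bar> * ennreal ((1 / sqrt (2*pi))^k * norm2k k x ^ 1 * exp (- (norm2k k x)\<^sup>2 / 2))
    = (\<Prod>i<k. ennreal (std_normal_density (x i))) * ennreal \<bar>dotk k v x\<bar>"
proof (cases "norm2k k x = 0")
  case True
  then show ?thesis
    using abs_dotk_le_norm2k[of k v x] by simp
next
  case False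
  then have x: "norm2k k x > 0"
    using norm2k_nonneg[of k x] by simp
  let ?c = "(1 / sqrt (2*pi))^k"
  have "ennreal \<bar>dotk k v (direction k x)\<bar> * ennreal (?c * norm2k k x ^ 1 * exp (- (norm2k k x)\<^sup>2 / 2))
      = ennreal (\<bar>dotk k v x\<bar> / norm2k k x * (?c * norm2k k x * exp (- (norm2k k x)\<^sup>2 / 2)))"
    using x by (simp add: dotk_direction ennreal_mult[symmetric])
  also have "\<dots> = ennreal ((?c * exp (- (norm2k k x)\<^sup>2 / 2)) * \<bar>dotk k v x\<bar>)"
    using x by (simp add: field_simps)
  finally show ?thesis
    by (simp add: prod_std_normal_density prod_ennreal ennreal_mult)
qed

lemma nn_integral_abs_dotk_direction:
  assumes k: "k \<ge> 1"
  shows "(\<integral>\<^sup>+x. ennreal \<bar>dotk k v (direction k x)\<bar> * indicator (unit_ballk k) x \<partial>lebk k)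
    = ennreal (norm2k k v * sqrt (2/pi) * sqrt (2*pi)^k / (real k * half_gaussian_moment k))"
proof -
  let ?c = "(1 / sqrt (2*pi))^k"
  let ?g = "\<lambda>x. ennreal \<bar>dotk k v (direction k x)\<bar>"
  let ?\<psi> = "\<lambda>r. ennreal (?c * r^1 * exp (- r\<^sup>2 / 2))"
  note fin = nn_integral_abs_dotk_direction_finite[of k v]
  have polar: "(\<integral>\<^sup>+x. ?g x * ?\<psi> (norm2k k x) \<partial>lebk k) =
     (\<integral>\<^sup>+x. ?g x * indicator (unit_ballk k) x \<partial>lebk k) *
     (\<integral>\<^sup>+r. ?\<psi> r * (indicator {0<..} r * ennreal (real k * r^(k-1))) \<partial>lborel)"
  proof (rule nn_integral_polar[OF k _ _ fin])
    show "?g (scalek k t x) = ?g x" if "t > 0" for x t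
      using dotk_direction_scalek[OF that] by (simp only:)
  qed measurable
  have "(\<integral>\<^sup>+x. ?g x * ?\<psi> (norm2k k x) \<partial>lebk k)
      = (\<integral>\<^sup>+x. (\<Prod>i<k. ennreal (std_normal_density (x i))) * ennreal \<bar>dotk k v x\<bar> \<partial>lebk k)"
    by (rule nn_integral_cong) (rule abs_dotk_direction_times_gaussian)
  also have "\<dots> = (\<integral>\<^sup>+x. ennreal \<bar>dotk k v x\<bar> \<partial>PiM {..<k} (\<lambda>_. std_normal))"
    unfolding PiM_std_normal by (simp add: nn_integral_density)
  also have "\<dots> = ennreal (norm2k k v * sqrt (2/pi))"
    by (rule nn_integral_abs_dotk_std_normal)
  finally have gaussian: "(\<integral>\<^sup>+x. ?g x * ?\<psi> (norm2k k x) \<partial>lebk k) = ennreal (norm2k k v * sqrt (2/pi))" .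
  have radial: "(\<integral>\<^sup>+r. ?\<psi> r * (indicator {0<..} r * ennreal (real k * r^(k-1))) \<partial>lborel)
      = ennreal (?c * real k * half_gaussian_moment (1 + k - 1))"
    using k by (intro nn_integral_radial_gaussian) auto
  have "(\<integral>\<^sup>+x. ?g x * indicator (unit_ballk k) x \<partial>lebk k) * ennreal (?c * real k * half_gaussian_moment k)
      = ennreal (norm2k k v * sqrt (2/pi))"
    using polar unfolding gaussian radial by simp
  then have "(\<integral>\<^sup>+x. ?g x * indicator (unit_ballk k) x \<partial>lebk k)
      = ennreal (norm2k k v * sqrt (2/pi) / (?c * real k * half_gaussian_moment k))"
    using half_gaussian_moment_pos[of k] k norm2k_nonneg[of k v] by (intro ennreal_eq_divide_if_mult_eq) auto
  also have "norm2k k v * sqrt (2/pi) / (?c * real k * half_gaussian_moment k)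
      = norm2k k v * sqrt (2/pi) * sqrt (2*pi)^k / (real k * half_gaussian_moment k)"
    by (simp add: power_one_over)
  finally show ?thesis .
qed

lemma measure_unit_ballk:
  "k \<ge> 1 \<Longrightarrow> measure (lebk k) (unit_ballk k) = sqrt (2*pi)^k / (real k * half_gaussian_moment (k - 1))"
  using emeasure_unit_ballk[of k] half_gaussian_moment_pos[of "k - 1"] by (simp add: measure_def)

lemma measure_unit_ballk_pos: "k \<ge> 1 \<Longrightarrow> measure (lebk k) (unit_ballk k) > 0"
  using half_gaussian_moment_pos[of "k - 1"] by (simp add: measure_unit_ballk)

lemma set_integrable_direction:
  fixes f :: "(nat \<Rightarrow> real) \<Rightarrow> real"
  assumes "(\<lambda>x. f (direction k x)) \<in> borel_measurable (lebk k)"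
    and "\<And>u. norm2k k u \<le> 1 \<Longrightarrow> \<bar>f u\<bar> \<le> C"
  shows "set_integrable (lebk k) (unit_ballk k) (\<lambda>x. f (direction k x))"
  unfolding set_integrable_def
  using assms norm2k_direction_le emeasure_unit_ballk_finite
  by (intro integrableI_bounded_set_indicator[where B=C]) auto

lemma set_integral_abs_dotk_direction:
  assumes k: "k \<ge> 1"
  shows "(LINT x:unit_ballk k|lebk k. \<bar>dotk k v (direction k x)\<bar>)
    = norm2k k v * sqrt (2/pi) * sqrt (2*pi)^k / (real k * half_gaussian_moment k)"
proof -
  have "has_bochner_integral (lebk k) (\<lambda>x. indicator (unit_ballk k) x *\<^sub>R \<bar>dotk k v (direction k x)\<bar>)
      (norm2k k v * sqrt (2/pi) * sqrt (2*pi)^k / (real k * half_gaussian_moment k))"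
  proof (rule has_bochner_integral_nn_integral)
    show "(\<integral>\<^sup>+x. ennreal (indicator (unit_ballk k) x *\<^sub>R \<bar>dotk k v (direction k x)\<bar>) \<partial>lebk k)
        = ennreal (norm2k k v * sqrt (2/pi) * sqrt (2*pi)^k / (real k * half_gaussian_moment k))"
      using nn_integral_abs_dotk_direction[OF k, of v]
      by (simp add: indicator_mult_ennreal mult.commute)
  qed (use half_gaussian_moment_pos[of k] norm2k_nonneg[of k v] in auto)
  then show ?thesis
    unfolding set_lebesgue_integral_def by (simp add: has_bochner_integral_iff)
qed

lemma sphere_avg_abs_dotk:
  "k \<ge> 1 \<Longrightarrow> sphere_avg k (\<lambda>u. \<bar>dotk k v u\<bar>) = Beta (real k / 2) (1/2) / pi * norm2k k v"
  unfolding sphere_avg_def set_integral_abs_dotk_direction measure_unit_ballk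
    half_gaussian_moment_ratio[symmetric]
  using half_gaussian_moment_pos[of k] half_gaussian_moment_pos[of "k - 1"]
  by (simp add: field_simps)

lemma set_integrable_abs_dotk_direction:
  "set_integrable (lebk k) (unit_ballk k) (\<lambda>x. \<bar>dotk k v (direction k x)\<bar>)"
  by (rule set_integrable_direction[where C="norm2k k v"]) (measurable, simp add: abs_dotk_le_of_norm2k_le_1)

lemma sphere_avg_mono:
  assumes "set_integrable (lebk k) (unit_ballk k) (\<lambda>x. f (direction k x))"
    and "set_integrable (lebk k) (unit_ballk k) (\<lambda>x. g (direction k x))"
    and "\<And>u. norm2k k u \<le> 1 \<Longrightarrow> f u \<le> g u"
  shows "sphere_avg k f \<le> sphere_avg k g"
  unfolding sphere_avg_def using assms norm2k_direction_le
  by (intro divide_right_mono set_integral_mono) auto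

lemma sphere_avg_le_const:
  assumes k: "k \<ge> 1"
    and "set_integrable (lebk k) (unit_ballk k) (\<lambda>x. f (direction k x))"
    and "\<And>u. norm2k k u \<le> 1 \<Longrightarrow> f u \<le> C"
  shows "sphere_avg k f \<le> C"
proof -
  have "sphere_avg k f \<le> sphere_avg k (\<lambda>_. C)"
    by (rule sphere_avg_mono[OF assms(2) set_integrable_direction[where C="\<bar>C\<bar>"]])
       (use assms(3) in auto)
  also have "sphere_avg k (\<lambda>_. C) = C"
    unfolding sphere_avg_def using emeasure_unit_ballk_finite[of k] measure_unit_ballk_pos[OF k]
    by (subst set_integral_const) auto
  finally show ?thesis .
qed

lemma sphere_avg_sum:
  assumes "finite I" "\<And>i. i \<in> I \<Longrightarrow> set_integrable (lebk k) (unit_ballk k) (\<lambda>x. f i (direction k x))"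
  shows "sphere_avg k (\<lambda>u. \<Sum>i\<in>I. f i u) = (\<Sum>i\<in>I. sphere_avg k (f i))"
proof -
  have "(LINT x:unit_ballk k|lebk k. \<Sum>i\<in>I. f i (direction k x))
      = (\<Sum>i\<in>I. LINT x:unit_ballk k|lebk k. f i (direction k x))"
    using assms unfolding set_lebesgue_integral_def set_integrable_def scaleR_sum_right
    by (intro Bochner_Integration.integral_sum) auto
  then show ?thesis
    unfolding sphere_avg_def by (simp add: sum_divide_distrib)
qed

section \<open>Mean-width diversity\<close>

lemma set_integrable_width_direction:
  assumes "finite A" "A \<noteq> {}"
  shows "set_integrable (lebk k) (unit_ballk k) (\<lambda>x. width k (convk A) (direction k x))"
proof (rule set_integrable_direction[where C="diam2 k A"])
  show "(\<lambda>x. width k (convk A) (direction k x)) \<in> borel_measurable (lebk k)"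
    unfolding width_convk[OF assms] using assms(1) by measurable
  show "\<bar>width k (convk A) u\<bar> \<le> diam2 k A" if "norm2k k u \<le> 1" for u
    using width_nonneg[OF assms] width_le_diam2[OF assms that] by simp
qed

lemma norm2k_diff_le_delta_w:
  assumes k: "k \<ge> 1" and A: "finite A" "a \<in> A" "b \<in> A"
  shows "norm2k k (\<lambda>i. a i - b i) \<le> delta_w k A"
proof -
  have "sphere_avg k (\<lambda>u. \<bar>dotk k (\<lambda>i. a i - b i) u\<bar>) \<le> sphere_avg k (width k (convk A))"
    using A by (intro sphere_avg_mono set_integrable_abs_dotk_direction set_integrable_width_direction
        abs_dotk_diff_le_width) auto
  then show ?thesis
    unfolding delta_w_def mean_width_def sphere_avg_abs_dotk[OF k]
    using Beta_half_pos[of "real k / 2"] k by (simp add: field_simps)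
qed

lemma diam2_le_delta_w:
  assumes "k \<ge> 1" "finite A" "A \<noteq> {}"
  shows "diam2 k A \<le> delta_w k A"
proof -
  obtain a where "a \<in> A" using assms(3) by blast
  then have "0 \<le> delta_w k A"
    using norm2k_diff_le_delta_w[OF assms(1,2), of a a] by (simp add: norm2k_def)
  then show ?thesis
    unfolding diam2_def pairwise_Max_le_iff[OF assms(2)]
    using norm2k_diff_le_delta_w[OF assms(1,2)] by blast
qed

lemma delta_w_le_diam2:
  assumes k: "k \<ge> 1" and A: "finite A" "A \<noteq> {}"
  shows "delta_w k A \<le> 2 * sqrt (real k) * diam2 k A"
proof -
  have "sphere_avg k (width k (convk A)) \<le> diam2 k A"
    using A by (intro sphere_avg_le_const k set_integrable_width_direction width_le_diam2)
  then have "delta_w k A \<le> pi / Beta (real k / 2) (1/2) * diam2 k A"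
    unfolding delta_w_def mean_width_def using Beta_half_pos[of "real k / 2"] k
    by (intro mult_left_mono) auto
  also have "\<dots> \<le> 2 * sqrt (real k) * diam2 k A"
    using A k unfolding diam2_def
    by (intro mult_right_mono pi_div_Beta_half_le pairwise_Max_nonneg) auto
  finally show ?thesis .
qed

lemma delta_w_doubleton: "k \<ge> 1 \<Longrightarrow> delta_w k {a, b} = norm2k k (\<lambda>i. a i - b i)"
  unfolding delta_w_def mean_width_def width_doubleton sphere_avg_abs_dotk
  using Beta_half_pos[of "real k / 2"] by simp

lemma sum_abs_le_width_cube:
  "(\<Sum>i<k. \<bar>u i\<bar>) \<le> width k (convk (indicator ` Pow {..<k})) u"
proof -
  let ?S = "{i. i < k \<and> u i > 0}" and ?T = "{i. i < k \<and> u i < 0}"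
  have "(\<Sum>i<k. \<bar>u i\<bar>) = dotk k (indicator ?S) u - dotk k (indicator ?T) u"
    unfolding dotk_def sum_subtractf[symmetric] by (intro sum.cong) (auto simp: indicator_def)
  also have "\<dots> \<le> width k (convk (indicator ` Pow {..<k})) u"
    by (intro dotk_diff_le_width) auto
  finally show ?thesis .
qed

lemma delta_w_cube_ge:
  assumes k: "k \<ge> 1"
  shows "real k \<le> delta_w k (indicator ` Pow {..<k})"
proof -
  let ?A = "indicator ` Pow {..<k} :: (nat \<Rightarrow> real) set"
  have integrable: "set_integrable (lebk k) (unit_ballk k) (\<lambda>x. \<bar>dotk k (coord_vec i 1) (direction k x)\<bar>)"
    for i by (rule set_integrable_abs_dotk_direction)
  have "Beta (real k / 2) (1/2) / pi * real k = (\<Sum>i<k. sphere_avg k (\<lambda>u. \<bar>dotk k (coord_vec i 1) u\<bar>))"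
    using k by (simp add: sphere_avg_abs_dotk norm2k_coord_vec)
  also have "\<dots> = sphere_avg k (\<lambda>u. \<Sum>i<k. \<bar>dotk k (coord_vec i 1) u\<bar>)"
    using integrable by (intro sphere_avg_sum[symmetric]) auto
  also have "\<dots> \<le> sphere_avg k (width k (convk ?A))"
  proof (rule sphere_avg_mono)
    show "set_integrable (lebk k) (unit_ballk k) (\<lambda>x. \<Sum>i<k. \<bar>dotk k (coord_vec i 1) (direction k x)\<bar>)"
      using integrable unfolding set_integrable_def scaleR_sum_right
      by (intro Bochner_Integration.integrable_sum) auto
    show "(\<Sum>i<k. \<bar>dotk k (coord_vec i 1) u\<bar>) \<le> width k (convk ?A) u" for u
      using sum_abs_le_width_cube[of u k] by (simp add: dotk_coord_vec)
  qed (auto intro: set_integrable_width_direction)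
  finally show ?thesis
    unfolding delta_w_def mean_width_def using Beta_half_pos[of "real k / 2"] k
    by (simp add: field_simps)
qed

lemma segment_diversities:
  assumes "k \<ge> 1"
  shows "diam1 k {coord_vec 0 1, \<lambda>_. 0} = 1" "delta1 k {coord_vec 0 1, \<lambda>_. 0} = 1"
    "diam2 k {coord_vec 0 1, \<lambda>_. 0} = 1" "delta_w k {coord_vec 0 1, \<lambda>_. 0} = 1"
  using assms
  by (simp_all add: diam1_doubleton delta1_doubleton diam2_doubleton delta_w_doubleton
      norm1k_coord_vec norm2k_coord_vec)

theorem lemma12:
  shows "(\<exists>c>0. \<forall>k\<ge>1. \<forall>A. finite A \<and> A \<noteq> {} \<and> (\<forall>a\<in>A. in_Rk k a) \<longrightarrow>
            diam1 k A \<le> delta1 k A \<and> delta1 k A \<le> real k * diam1 k A \<and>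
            diam2 k A \<le> delta_w k A \<and> delta_w k A \<le> c * sqrt (real k) * diam2 k A)
       \<and> (\<forall>k\<ge>1. \<exists>A. finite A \<and> A \<noteq> {} \<and> (\<forall>a\<in>A. in_Rk k a) \<and> diam1 k A > 0 \<and>
            delta1 k A = diam1 k A)
       \<and> (\<forall>k\<ge>1. \<exists>A. finite A \<and> A \<noteq> {} \<and> (\<forall>a\<in>A. in_Rk k a) \<and> diam1 k A > 0 \<and>
            delta1 k A = real k * diam1 k A)
       \<and> (\<forall>k\<ge>1. \<exists>A. finite A \<and> A \<noteq> {} \<and> (\<forall>a\<in>A. in_Rk k a) \<and> diam2 k A > 0 \<and>
            delta_w k A = diam2 k A)
       \<and> (\<exists>c'>0. \<forall>k\<ge>1. \<exists>A. finite A \<and> A \<noteq> {} \<and> (\<forall>a\<in>A. in_Rk k a) \<and> diam2 k A > 0 \<and>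
            delta_w k A \<ge> c' * sqrt (real k) * diam2 k A)"
proof -
  let ?segment = "{coord_vec 0 1, \<lambda>_. 0} :: (nat \<Rightarrow> real) set"
  have segment_in_Rk: "\<forall>a\<in>?segment. in_Rk k a" if "k \<ge> 1" for k
    using that in_Rk_coord_vec[of 0 k 1] by (simp add: in_Rk_def[of k "\<lambda>_. 0"])
  show ?thesis
    apply (intro conjI)
    subgoal
      by (intro exI[of _ "2::real"])
         (simp add: diam1_le_delta1 delta1_le_diam1 diam2_le_delta_w delta_w_le_diam2)
    subgoal using segment_in_Rk segment_diversities by (intro allI impI exI[of _ ?segment]) simp
    subgoal
      apply (intro allI impI)
      subgoal for k
        using coord_vec_mem_cross_polytope[of 0 k 1] in_Rk_of_mem_cross_polytope
        by (intro exI[of _ "cross_polytope k"])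
           (auto simp: finite_cross_polytope diam1_cross_polytope delta1_cross_polytope)
      done
    subgoal using segment_in_Rk segment_diversities by (intro allI impI exI[of _ ?segment]) simp
    subgoal
      apply (intro exI[of _ "1::real"] conjI allI impI)
      subgoal by simp
      subgoal for k
        using delta_w_cube_ge[of k] in_Rk_indicator[of _ k]
        by (intro exI[of _ "indicator ` Pow {..<k}"]) (auto simp: diam2_cube)
      done
    done
qed

end
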